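(* Let $G$ be a finite group and $p$ a prime; all sums below are over nonidentity $p$-subgroups of $G$. Then: (i) $\mathcal S^*_G$ has weighting $k^H=\sum_K\mu(H,K)$, coweighting $k_K=-\mu(K)$, and $\chi(\mathcal S^*_G)=|G|\chi(\mathcal T^*_G)$. (ii) $\mathcal T^*_G$ has weighting $k^H=|G|^{-1}\sum_K\mu(H,K)$, coweighting $k_K=-|G|^{-1}\mu(K)$, and $\chi(\mathcal T^*_G)=\sum_{[K]}\frac{-\mu(K)}{|\mathcal T^*_G(K)|}$. (iii) $\mathcal L^*_G$ has weighting $k^H=|G|^{-1}\sum_K\mu(H,K)|O^pC_G(K)|$, coweighting $k_K=-|G|^{-1}\mu(K)|O^pC_G(K)|$, and $\chi(\mathcal L^*_G)=\sum_{[K]}\frac{-\mu(K)}{|\mathcal L^*_G(K)|}$. (iv) $\mathcal F^*_G$ has weighting $k^H=|G|^{-1}\sum_K\mu(H,K)|C_G(K)|$, coweighting $k_K=-|G|^{-1}\mu(K)|C_G(K)|$, and $\chi(\mathcal F^*_G)=\sum_{[K]}\frac{-\mu(K)}{|\mathcal F^*_G(K)|}$. (v) $\mathcal O^*_G$ has weighting $k^H=|G|^{-1}|H|\sum_K\mu(H,K)$, coweighting $k_K=|G|^{-1}\sum_H|H|\mu(H,K)$, and $\chi(\mathcal O^*_G)=|G|^{-1}\sum_{H,K}|H|\mu(H,K)$. Here $\sum_{[K]}$ runs over the $G$-conjugacy classes of nonidentity $p$-subgroups $K$.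
   Context: For subgroups $H,K\le G$ write $N_G(H,K)=\{g\in G: g^{-1}Hg\le K\}$; $O^p(X)$ is the smallest normal subgroup of a finite group $X$ with $p$-group quotient. Categories with objects the nonidentity $p$-subgroups of $G$ and composition induced by multiplication in $G$: $\mathcal S^*_G$ the poset under inclusion; $\mathcal T^*_G(H,K)=N_G(H,K)$; $\mathcal L^*_G(H,K)=O^p(C_G(H))\backslash N_G(H,K)$; $\mathcal F^*_G(H,K)=C_G(H)\backslash N_G(H,K)$; $\mathcal O^*_G(H,K)=N_G(H,K)/K$; $\mathcal C(K)=\mathcal C(K,K)$. Leinster: for a finite category $\mathcal C$, a weighting is $k^\bullet$ with $\sum_b|\mathcal C(a,b)|k^b=1$ for all $a$, a coweighting is $k_\bullet$ with $\sum_ak_a|\mathcal C(a,b)|=1$ for all $b$, and if both exist $\chi(\mathcal C)=\sum_bk^b=\sum_ak_a$. $\mu(H,K)$ is the Möbius function of the poset of all subgroups of $G$ ($\mu(H,H)=1$, $\mu(H,K)=-\sum_{H\le L<K}\mu(H,L)$ for $H<K$, $0$ if $H\not\le K$), $\mu(K)=\mu(1,K)$. *)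

theory Defs
  imports Complex_Main "HOL-Computational_Algebra.Primes" "HOL-Algebra.Algebra"
begin

definition psubs :: "('a,'b) monoid_scheme \<Rightarrow> nat \<Rightarrow> 'a set set" where
  "psubs G p = {H. subgroup H G \<and> H \<noteq> {\<one>\<^bsub>G\<^esub>} \<and> (\<exists>n. card H = p ^ n)}"

definition conjg :: "('a,'b) monoid_scheme \<Rightarrow> 'a \<Rightarrow> 'a set \<Rightarrow> 'a set" where
  "conjg G g H = {inv\<^bsub>G\<^esub> g \<otimes>\<^bsub>G\<^esub> h \<otimes>\<^bsub>G\<^esub> g | h. h \<in> H}"

definition transp :: "('a,'b) monoid_scheme \<Rightarrow> 'a set \<Rightarrow> 'a set \<Rightarrow> 'a set" where
  "transp G H K = {g \<in> carrier G. conjg G g H \<subseteq> K}"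

definition centr :: "('a,'b) monoid_scheme \<Rightarrow> 'a set \<Rightarrow> 'a set" where
  "centr G H = {g \<in> carrier G. \<forall>h\<in>H. g \<otimes>\<^bsub>G\<^esub> h = h \<otimes>\<^bsub>G\<^esub> g}"

definition Op :: "('a,'b) monoid_scheme \<Rightarrow> nat \<Rightarrow> 'a set \<Rightarrow> 'a set" where
  "Op G p Y = \<Inter> {N. normal N (G\<lparr>carrier := Y\<rparr>) \<and>
                       (\<exists>n. card (RCOSETS (G\<lparr>carrier := Y\<rparr>) N) = p ^ n)}"

function mu :: "('a,'b) monoid_scheme \<Rightarrow> 'a set \<Rightarrow> 'a set \<Rightarrow> int" where
  "mu G H K = (if subgroup H G \<and> subgroup K G \<and> H \<subseteq> K \<and> finite K then
      (if H = K then 1 else - (\<Sum>L\<in>{L. subgroup L G \<and> H \<subseteq> L \<and> L \<subset> K}. mu G H L))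
    else 0)"
  by auto
termination
  by (relation "measure (\<lambda>(G,H,K). card K)")
     (auto intro: psubset_card_mono)

definition mu1 :: "('a,'b) monoid_scheme \<Rightarrow> 'a set \<Rightarrow> int" where
  "mu1 G K = mu G {\<one>\<^bsub>G\<^esub>} K"

definition homS :: "'a set \<Rightarrow> 'a set \<Rightarrow> unit set" where
  "homS H K = (if H \<subseteq> K then {()} else {})"

definition homT :: "('a,'b) monoid_scheme \<Rightarrow> 'a set \<Rightarrow> 'a set \<Rightarrow> 'a set" where
  "homT G H K = transp G H K"

text \<open>O^p(C_G(H)) \ N_G(H,K): orbits of left multiplication, i.e. right cosets U g.\<close>
definition homL :: "('a,'b) monoid_scheme \<Rightarrow> nat \<Rightarrow> 'a set \<Rightarrow> 'a set \<Rightarrow> 'a set set" where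
  "homL G p H K = {Op G p (centr G H) #>\<^bsub>G\<^esub> g | g. g \<in> transp G H K}"

definition homF :: "('a,'b) monoid_scheme \<Rightarrow> 'a set \<Rightarrow> 'a set \<Rightarrow> 'a set set" where
  "homF G H K = {centr G H #>\<^bsub>G\<^esub> g | g. g \<in> transp G H K}"

text \<open>N_G(H,K)/K: left cosets g K.\<close>
definition homO :: "('a,'b) monoid_scheme \<Rightarrow> 'a set \<Rightarrow> 'a set \<Rightarrow> 'a set set" where
  "homO G H K = {g <#\<^bsub>G\<^esub> K | g. g \<in> transp G H K}"

text \<open>Leinster weightings / coweightings / Euler characteristic of a finite category,
  given by its (finite) object set and the cardinalities z a b = |C(a,b)| of its hom-sets.\<close>
definition is_weighting :: "'o set \<Rightarrow> ('o \<Rightarrow> 'o \<Rightarrow> nat) \<Rightarrow> ('o \<Rightarrow> real) \<Rightarrow> bool" where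
  "is_weighting Ob z k \<longleftrightarrow> (\<forall>a\<in>Ob. (\<Sum>b\<in>Ob. real (z a b) * k b) = 1)"

definition is_coweighting :: "'o set \<Rightarrow> ('o \<Rightarrow> 'o \<Rightarrow> nat) \<Rightarrow> ('o \<Rightarrow> real) \<Rightarrow> bool" where
  "is_coweighting Ob z k \<longleftrightarrow> (\<forall>b\<in>Ob. (\<Sum>a\<in>Ob. k a * real (z a b)) = 1)"

text \<open>Euler characteristic: the sum of a weighting (well defined when weighting and
  coweighting both exist).\<close>
definition euler_char :: "'o set \<Rightarrow> ('o \<Rightarrow> 'o \<Rightarrow> nat) \<Rightarrow> real" where
  "euler_char Ob z = (\<Sum>b\<in>Ob. (SOME k. is_weighting Ob z k) b)"

definition conjclasses :: "('a,'b) monoid_scheme \<Rightarrow> nat \<Rightarrow> 'a set set set" where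
  "conjclasses G p = {{conjg G g K | g. g \<in> carrier G} | K. K \<in> psubs G p}"

end

(*
  Everything is reduced to Moebius inversion in the subgroup lattice and to the count
  |N_G(H,K)| = #{g. H^g <= K}.  For the poset S the weighting comes from
  sum_{L >= H} sum_K mu(L,K) w(K) = w(H), and the coweighting from sum_{1 <= L <= K} mu(1,L) = 0.
  Summing against |N_G(H,K)| instead of the order relation counts pairs (g, K) with H^g <= K,
  so by conjugation invariance of mu, of |C_G(K)| and of |O^p C_G(K)| every row (column) sum of
  the transporter category is |G| times the corresponding sum for S at a conjugate object.  The
  categories L, F and O are quotients of T by free actions of O^p C_G(H), C_G(H) and K, which
  rescales rows or columns.  Finally chi is the sum of the coweighting, and the G-class of K
  has |G| / |N_G(K,K)| members.
*)

theory Submission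
  imports Defs
begin

declare mu.simps [simp del]

lemma conjg_eq_image: "conjg G g H = (\<lambda>h. inv\<^bsub>G\<^esub> g \<otimes>\<^bsub>G\<^esub> h \<otimes>\<^bsub>G\<^esub> g) ` H"
  unfolding conjg_def by auto

context group
begin

lemma mult_inv_cancel_left [simp]: "g \<in> carrier G \<Longrightarrow> y \<in> carrier G \<Longrightarrow> g \<otimes> (inv g \<otimes> y) = y"
  by (simp add: m_assoc[symmetric])

lemma inv_mult_cancel_left [simp]: "g \<in> carrier G \<Longrightarrow> y \<in> carrier G \<Longrightarrow> inv g \<otimes> (g \<otimes> y) = y"
  by (simp add: m_assoc[symmetric])

lemma conjg_eq_cosets: "conjg G g H = inv g <# H #> g"
  unfolding conjg_def l_coset_def r_coset_def by auto

lemma conjg_closed: "g \<in> carrier G \<Longrightarrow> S \<subseteq> carrier G \<Longrightarrow> conjg G g S \<subseteq> carrier G"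
  unfolding conjg_eq_image by auto

lemma conjg_conjg:
  "g \<in> carrier G \<Longrightarrow> h \<in> carrier G \<Longrightarrow> S \<subseteq> carrier G \<Longrightarrow> conjg G h (conjg G g S) = conjg G (g \<otimes> h) S"
  unfolding conjg_eq_image image_image
  by (rule image_cong) (auto simp: inv_mult_group m_assoc subsetD)

lemma conjg_one: "S \<subseteq> carrier G \<Longrightarrow> conjg G \<one> S = S"
  unfolding conjg_eq_image by (auto simp: subsetD image_iff)

lemma conjg_inv_conjg: "g \<in> carrier G \<Longrightarrow> S \<subseteq> carrier G \<Longrightarrow> conjg G (inv g) (conjg G g S) = S"
  by (simp add: conjg_conjg conjg_one)

lemma conjg_conjg_inv: "g \<in> carrier G \<Longrightarrow> S \<subseteq> carrier G \<Longrightarrow> conjg G g (conjg G (inv g) S) = S"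
  by (simp add: conjg_conjg conjg_one)

lemma conjg_mono: "S \<subseteq> T \<Longrightarrow> conjg G g S \<subseteq> conjg G g T"
  unfolding conjg_eq_image by auto

lemma conjg_subset_conjg_iff:
  "g \<in> carrier G \<Longrightarrow> S \<subseteq> carrier G \<Longrightarrow> T \<subseteq> carrier G \<Longrightarrow> conjg G g S \<subseteq> conjg G g T \<longleftrightarrow> S \<subseteq> T"
  by (metis conjg_inv_conjg conjg_mono)

lemma conjg_eq_conjg_iff:
  "g \<in> carrier G \<Longrightarrow> S \<subseteq> carrier G \<Longrightarrow> T \<subseteq> carrier G \<Longrightarrow> conjg G g S = conjg G g T \<longleftrightarrow> S = T"
  by (metis conjg_inv_conjg)

lemma conjg_subset_iff:
  "g \<in> carrier G \<Longrightarrow> S \<subseteq> carrier G \<Longrightarrow> T \<subseteq> carrier G \<Longrightarrow> conjg G g S \<subseteq> T \<longleftrightarrow> S \<subseteq> conjg G (inv g) T"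
  by (metis conjg_inv_conjg conjg_conjg_inv conjg_mono inv_closed)

lemma card_conjg: "g \<in> carrier G \<Longrightarrow> S \<subseteq> carrier G \<Longrightarrow> card (conjg G g S) = card S"
  unfolding conjg_eq_image by (rule card_image) (auto simp: inj_on_def subsetD)

lemma conjg_subgroup: "g \<in> carrier G \<Longrightarrow> subgroup H G \<Longrightarrow> subgroup (conjg G g H) G"
  unfolding conjg_eq_cosets by (rule subgroup_conjugation_is_surj1)

lemma conjg_trivial: "g \<in> carrier G \<Longrightarrow> conjg G g {\<one>} = {\<one>}"
  unfolding conjg_eq_image by simp

lemma centr_closed: "centr G H \<subseteq> carrier G"
  unfolding centr_def by auto

lemma inv_conj_commuting:
  assumes "u \<in> carrier G" "h \<in> carrier G" "u \<otimes> h = h \<otimes> u"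
  shows "inv u \<otimes> h \<otimes> u = h"
proof -
  have "inv u \<otimes> h \<otimes> u = inv u \<otimes> (u \<otimes> h)" using assms by (simp add: m_assoc)
  also have "\<dots> = h" using assms(1,2) by (simp add: m_assoc[symmetric])
  finally show ?thesis .
qed

lemma conjg_centr_self: assumes "u \<in> centr G H" "H \<subseteq> carrier G" shows "conjg G u H = H"
proof -
  have "inv u \<otimes> h \<otimes> u = h" if "h \<in> H" for h
    using assms that by (intro inv_conj_commuting) (auto simp: centr_def)
  then show ?thesis unfolding conjg_eq_image by simp
qed

lemma centr_subgroup: assumes "H \<subseteq> carrier G" shows "subgroup (centr G H) G"
proof (rule subgroupI)
  fix a b assume a: "a \<in> centr G H" and b: "b \<in> centr G H"
  have ac: "a \<in> carrier G" and ah: "\<And>h. h \<in> H \<Longrightarrow> a \<otimes> h = h \<otimes> a"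
    and bc: "b \<in> carrier G" and bh: "\<And>h. h \<in> H \<Longrightarrow> b \<otimes> h = h \<otimes> b"
    using a b unfolding centr_def by auto
  have "inv a \<otimes> h = h \<otimes> inv a" if h: "h \<in> H" for h
  proof -
    have hc: "h \<in> carrier G" using h assms by auto
    have "inv a \<otimes> h = (inv a \<otimes> h \<otimes> a) \<otimes> inv a" using ac hc by (simp add: m_assoc)
    also have "\<dots> = h \<otimes> inv a" using inv_conj_commuting[OF ac hc ah[OF h]] by simp
    finally show ?thesis .
  qed
  then show "inv a \<in> centr G H" using ac unfolding centr_def by simp
  have "a \<otimes> b \<otimes> h = h \<otimes> (a \<otimes> b)" if h: "h \<in> H" for h
  proof -
    have hc: "h \<in> carrier G" using h assms by auto
    have "a \<otimes> b \<otimes> h = a \<otimes> (h \<otimes> b)" using ac bc hc by (simp add: m_assoc bh[OF h])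
    also have "\<dots> = h \<otimes> (a \<otimes> b)" using ac bc hc by (simp add: m_assoc[symmetric] ah[OF h])
    finally show ?thesis .
  qed
  then show "a \<otimes> b \<in> centr G H" using ac bc unfolding centr_def by simp
qed (use assms in \<open>auto simp: centr_def subsetD\<close>)

lemma conjg_centr_subset:
  assumes g: "g \<in> carrier G" and H: "H \<subseteq> carrier G"
  shows "conjg G g (centr G H) \<subseteq> centr G (conjg G g H)"
proof
  fix x assume "x \<in> conjg G g (centr G H)"
  then obtain c where c: "c \<in> carrier G" "\<And>h. h \<in> H \<Longrightarrow> c \<otimes> h = h \<otimes> c" and x: "x = inv g \<otimes> c \<otimes> g"
    unfolding conjg_eq_image centr_def by auto
  have "x \<otimes> (inv g \<otimes> h \<otimes> g) = (inv g \<otimes> h \<otimes> g) \<otimes> x" if h: "h \<in> H" for h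
  proof -
    have hc: "h \<in> carrier G" using h H by auto
    have "x \<otimes> (inv g \<otimes> h \<otimes> g) = inv g \<otimes> (c \<otimes> h) \<otimes> g" using c g hc x by (simp add: m_assoc)
    also have "\<dots> = (inv g \<otimes> h \<otimes> g) \<otimes> x" using c g hc x by (simp add: c(2)[OF h] m_assoc)
    finally show ?thesis .
  qed
  moreover have "x \<in> carrier G" using c g x by simp
  ultimately show "x \<in> centr G (conjg G g H)" unfolding centr_def conjg_eq_image by auto
qed

lemma conjg_centr:
  assumes g: "g \<in> carrier G" and H: "H \<subseteq> carrier G"
  shows "conjg G g (centr G H) = centr G (conjg G g H)"
proof
  have "centr G (conjg G g H) = conjg G g (conjg G (inv g) (centr G (conjg G g H)))"
    using g centr_closed by (simp add: conjg_conjg_inv)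
  also have "\<dots> \<subseteq> conjg G g (centr G (conjg G (inv g) (conjg G g H)))"
    using g H conjg_closed by (intro conjg_mono conjg_centr_subset) auto
  also have "\<dots> = conjg G g (centr G H)" using g H by (simp add: conjg_inv_conjg)
  finally show "centr G (conjg G g H) \<subseteq> conjg G g (centr G H)" .
qed (rule conjg_centr_subset[OF g H])

lemma normal_in_subgroup_iff:
  assumes Y: "subgroup Y G"
  shows "N \<lhd> G\<lparr>carrier := Y\<rparr> \<longleftrightarrow>
         subgroup N G \<and> N \<subseteq> Y \<and> (\<forall>y\<in>Y. \<forall>n\<in>N. y \<otimes> n \<otimes> inv y \<in> N)"
proof -
  have "subgroup N (G\<lparr>carrier := Y\<rparr>) \<longleftrightarrow> subgroup N G \<and> N \<subseteq> Y"
    using incl_subgroup[OF Y] subgroup_incl[OF _ Y] subgroup.subset by fastforce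
  then show ?thesis
    using m_inv_consistent[OF Y] subgroup.subset
    unfolding group.normal_inv_iff[OF subgroup_imp_group[OF Y]] by fastforce
qed

lemma index_mult_card:
  assumes "subgroup Y G" "subgroup N (G\<lparr>carrier := Y\<rparr>)"
  shows "card (RCOSETS (G\<lparr>carrier := Y\<rparr>) N) * card N = card Y"
  using group.lagrange[OF subgroup_imp_group[OF assms(1)] assms(2)] unfolding order_def by simp

definition conj_class :: "'a set \<Rightarrow> 'a set set" where
  "conj_class K = {conjg G g K | g. g \<in> carrier G}"

text \<open>The library's conjugation action is \<open>H \<mapsto> g H g\<inverse>\<close>, whereas \<open>conjg\<close> is the right action
  \<open>H \<mapsto> g\<inverse> H g\<close>; their orbits agree.\<close>
lemma conj_class_eq_orbit:
  assumes K: "K \<subseteq> carrier G"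
  shows "conj_class K = orbit G (\<lambda>g. \<lambda>H\<in>{H. H \<subseteq> carrier G}. g <# H #> inv g) K"
    (is "_ = orbit G ?\<phi> K")
proof -
  have \<phi>: "?\<phi> g K = conjg G (inv g) K" if "g \<in> carrier G" for g
    using that K by (simp add: conjg_eq_cosets)
  show ?thesis
  proof (intro equalityI subsetI)
    fix S assume "S \<in> conj_class K"
    then obtain g where g: "g \<in> carrier G" and S: "S = conjg G g K" unfolding conj_class_def by blast
    then have "S = ?\<phi> (inv g) K" using \<phi>[of "inv g"] by simp
    then show "S \<in> orbit G ?\<phi> K" unfolding orbit_def using g by blast
  next
    fix S assume "S \<in> orbit G ?\<phi> K"
    then obtain g where g: "g \<in> carrier G" and S: "S = ?\<phi> g K" unfolding orbit_def by blast
    then show "S \<in> conj_class K" unfolding conj_class_def using \<phi>[OF g] by blast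
  qed
qed

lemma stabilizer_conjugation:
  assumes K: "K \<subseteq> carrier G" "finite K"
  shows "stabilizer G (\<lambda>g. \<lambda>H\<in>{H. H \<subseteq> carrier G}. g <# H #> inv g) K = transp G K K"
    (is "stabilizer G ?\<phi> K = _")
proof -
  have "?\<phi> g K = K \<longleftrightarrow> conjg G g K \<subseteq> K" if g: "g \<in> carrier G" for g
  proof -
    have "?\<phi> g K = K \<longleftrightarrow> conjg G (inv g) K = K" using g K by (simp add: conjg_eq_cosets)
    also have "\<dots> \<longleftrightarrow> conjg G g K = K"
      using g K(1) by (metis conjg_conjg_inv conjg_inv_conjg)
    also have "\<dots> \<longleftrightarrow> conjg G g K \<subseteq> K"
      using card_subset_eq[OF K(2)] card_conjg[OF g K(1)] by auto
    finally show ?thesis .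
  qed
  then show ?thesis unfolding stabilizer_def transp_def by blast
qed

lemma card_conj_class:
  assumes "K \<subseteq> carrier G" "finite K"
  shows "card (conj_class K) * card (transp G K K) = order G"
  using group_action.orbit_stabilizer_theorem[OF action_by_conjugation_on_power_set, of K] assms
  unfolding conj_class_eq_orbit[OF assms(1)] stabilizer_conjugation[OF assms] by simp

lemma conj_class_eq:
  assumes K: "K \<subseteq> carrier G" and K': "K' \<in> conj_class K"
  shows "conj_class K' = conj_class K"
proof -
  obtain a where a: "a \<in> carrier G" and K'_eq: "K' = conjg G a K" using K' unfolding conj_class_def by blast
  have "conjg G b K' = conjg G (a \<otimes> b) K" if "b \<in> carrier G" for b
    using conjg_conjg[OF a that K] K'_eq by simp
  moreover have "conjg G c K = conjg G (inv a \<otimes> c) K'" if "c \<in> carrier G" for c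
    using conjg_conjg[OF a _ K, of "inv a \<otimes> c"] K'_eq a that by (simp add: m_assoc[symmetric])
  ultimately show ?thesis unfolding conj_class_def using a by blast
qed

lemma self_in_conj_class: "K \<subseteq> carrier G \<Longrightarrow> K \<in> conj_class K"
  unfolding conj_class_def using conjg_one[of K, symmetric] one_closed by blast

end

text \<open>The Moebius function by the recursion over the lower end of the interval. That it agrees
  with \<open>mu\<close> yields the second orthogonality relation \<open>sum_mu_interval_right\<close>.\<close>
function mu_dual :: "('a,'b) monoid_scheme \<Rightarrow> 'a set \<Rightarrow> 'a set \<Rightarrow> int" where
  "mu_dual G H K = (if subgroup H G \<and> subgroup K G \<and> H \<subseteq> K \<and> finite K then
      (if H = K then 1 else - (\<Sum>L\<in>{L. subgroup L G \<and> H \<subset> L \<and> L \<subseteq> K}. mu_dual G L K))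
    else 0)"
  by auto
termination
proof (relation "measure (\<lambda>(G, H, K). card K - card H)")
  fix G :: "('a,'b) monoid_scheme" and H K L
  assume HK: "subgroup H G \<and> subgroup K G \<and> H \<subseteq> K \<and> finite K"
    and L: "L \<in> {L. subgroup L G \<and> H \<subset> L \<and> L \<subseteq> K}"
  then have "finite L" using rev_finite_subset by blast
  then have "card H < card L" "card L \<le> card K"
    using HK L psubset_card_mono card_mono by auto
  then show "((G, L, K), G, H, K) \<in> measure (\<lambda>(G, H, K). card K - card H)" by simp
qed auto

declare mu_dual.simps [simp del]

definition p_index_normals :: "('a,'b) monoid_scheme \<Rightarrow> nat \<Rightarrow> 'a set \<Rightarrow> 'a set set" where
  "p_index_normals G p Y = {N. normal N (G\<lparr>carrier := Y\<rparr>) \<and>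
                               (\<exists>n. card (RCOSETS (G\<lparr>carrier := Y\<rparr>) N) = p ^ n)}"

lemma Op_eq_Inter: "Op G p Y = \<Inter> (p_index_normals G p Y)"
  unfolding Op_def p_index_normals_def by simp

locale finite_group = group +
  assumes finite_carrier: "finite (carrier G)"
begin

lemma finite_subgroup: "subgroup H G \<Longrightarrow> finite H"
  by (rule rev_finite_subset[OF finite_carrier subgroup.subset])

lemma card_subgroup_pos: "subgroup H G \<Longrightarrow> card H > 0"
  using finite_subgroup subgroup.one_closed by (auto simp: card_gt_0_iff)

lemma order_pos: "order G > 0"
  using finite_carrier order_gt_0_iff_finite by blast

definition interval :: "'a set \<Rightarrow> 'a set \<Rightarrow> 'a set set" where
  "interval H K = {L. subgroup L G \<and> H \<subseteq> L \<and> L \<subseteq> K}"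

lemma finite_interval: "finite (interval H K)"
proof (rule finite_subset)
  show "interval H K \<subseteq> Pow (carrier G)" unfolding interval_def using subgroup.subset by blast
qed (simp add: finite_carrier)

lemma mu_refl: "subgroup H G \<Longrightarrow> mu G H H = 1"
  using finite_subgroup[of H] by (subst mu.simps) simp

lemma mu_psubset:
  assumes "subgroup H G" "subgroup K G" "H \<subset> K"
  shows "mu G H K = - (\<Sum>L\<in>{L. subgroup L G \<and> H \<subseteq> L \<and> L \<subset> K}. mu G H L)"
proof -
  have "subgroup H G \<and> subgroup K G \<and> H \<subseteq> K \<and> finite K" "H \<noteq> K"
    using assms finite_subgroup[OF assms(2)] by auto
  then show ?thesis by (subst mu.simps[of G H K]) (simp only: if_True if_False simp_thms)
qed

lemma mu_eq_0: "\<not> H \<subseteq> K \<Longrightarrow> mu G H K = 0"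
  by (subst mu.simps) simp

lemma mu_dual_refl: "subgroup H G \<Longrightarrow> mu_dual G H H = 1"
  using finite_subgroup[of H] by (subst mu_dual.simps) simp

lemma mu_dual_psubset:
  assumes "subgroup H G" "subgroup K G" "H \<subset> K"
  shows "mu_dual G H K = - (\<Sum>L\<in>{L. subgroup L G \<and> H \<subset> L \<and> L \<subseteq> K}. mu_dual G L K)"
proof -
  have "subgroup H G \<and> subgroup K G \<and> H \<subseteq> K \<and> finite K" "H \<noteq> K"
    using assms finite_subgroup[OF assms(2)] by auto
  then show ?thesis by (subst mu_dual.simps[of G H K]) (simp only: if_True if_False simp_thms)
qed

lemma sum_mu_interval_left:
  assumes "subgroup H G" "subgroup K G" "H \<subseteq> K"
  shows "(\<Sum>L\<in>interval H K. mu G H L) = (if H = K then 1 else 0)"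
proof (cases "H = K")
  case True
  then have "interval H K = {K}" unfolding interval_def using assms by auto
  then show ?thesis using True mu_refl assms by simp
next
  case False
  let ?S = "{L. subgroup L G \<and> H \<subseteq> L \<and> L \<subset> K}"
  have "interval H K = insert K ?S" "K \<notin> ?S" unfolding interval_def using assms by auto
  moreover have "finite ?S" by (rule rev_finite_subset[OF finite_interval[of H K]]) (auto simp: interval_def)
  ultimately show ?thesis using False mu_psubset[OF assms(1,2)] assms(3) by simp
qed

lemma sum_mu_dual_interval:
  assumes "subgroup H G" "subgroup K G" "H \<subseteq> K"
  shows "(\<Sum>L\<in>interval H K. mu_dual G L K) = (if H = K then 1 else 0)"
proof (cases "H = K")
  case True
  then have "interval H K = {K}" unfolding interval_def using assms by auto
  then show ?thesis using True mu_dual_refl assms by simp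
next
  case False
  let ?S = "{L. subgroup L G \<and> H \<subset> L \<and> L \<subseteq> K}"
  have "interval H K = insert H ?S" "H \<notin> ?S" unfolding interval_def using assms by auto
  moreover have "finite ?S" by (rule rev_finite_subset[OF finite_interval[of H K]]) (auto simp: interval_def)
  ultimately show ?thesis using False mu_dual_psubset[OF assms(1,2)] assms(3) by simp
qed

text \<open>A left inverse in the incidence algebra is also a right inverse: the sum of
  \<open>mu(H,L) * mu_dual(M,K)\<close> over \<open>H \<le> L \<le> M \<le> K\<close> collapses in two ways.\<close>
lemma mu_dual_eq_mu:
  assumes H: "subgroup H G" and K: "subgroup K G" and "H \<subseteq> K"
  shows "mu_dual G H K = mu G H K"
proof -
  let ?I = "interval H K"
  let ?f = "\<lambda>L M. mu G H L * mu_dual G M K"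
  have "mu G H K = (\<Sum>L\<in>?I. mu G H L * (if L = K then 1 else 0))"
    using finite_interval[of H K] K assms(3)
    by (simp add: if_distrib[of "\<lambda>x. _ * x"] sum.delta' interval_def cong: if_cong)
  also have "\<dots> = (\<Sum>L\<in>?I. \<Sum>M\<in>{M\<in>?I. L \<subseteq> M}. ?f L M)"
  proof (rule sum.cong[OF refl])
    fix L assume L: "L \<in> ?I"
    then have "{M\<in>?I. L \<subseteq> M} = interval L K" unfolding interval_def by auto
    then show "mu G H L * (if L = K then 1 else 0) = (\<Sum>M\<in>{M\<in>?I. L \<subseteq> M}. ?f L M)"
      using sum_mu_dual_interval[of L K] L K unfolding interval_def
      by (simp add: sum_distrib_left[symmetric])
  qed
  also have "\<dots> = (\<Sum>M\<in>?I. \<Sum>L\<in>{L\<in>?I. L \<subseteq> M}. ?f L M)"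
    by (rule sum.swap_restrict[OF finite_interval finite_interval])
  also have "\<dots> = (\<Sum>M\<in>?I. (if H = M then 1 else 0) * mu_dual G M K)"
  proof (rule sum.cong[OF refl])
    fix M assume M: "M \<in> ?I"
    then have "{L\<in>?I. L \<subseteq> M} = interval H M" unfolding interval_def by auto
    then show "(\<Sum>L\<in>{L\<in>?I. L \<subseteq> M}. ?f L M) = (if H = M then 1 else 0) * mu_dual G M K"
      using sum_mu_interval_left[of H M] M H unfolding interval_def
      by (simp add: sum_distrib_right[symmetric])
  qed
  also have "\<dots> = mu_dual G H K"
    using finite_interval[of H K] H assms(3)
    by (simp add: if_distrib[of "\<lambda>x. x * _"] sum.delta interval_def cong: if_cong)
  finally show ?thesis by simp
qed

lemma sum_mu_interval_right:
  assumes "subgroup H G" "subgroup K G" "H \<subseteq> K"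
  shows "(\<Sum>L\<in>interval H K. mu G L K) = (if H = K then 1 else 0)"
proof -
  have "(\<Sum>L\<in>interval H K. mu G L K) = (\<Sum>L\<in>interval H K. mu_dual G L K)"
    using assms by (intro sum.cong refl) (auto simp: interval_def intro!: mu_dual_eq_mu[symmetric])
  then show ?thesis using sum_mu_dual_interval[OF assms] by simp
qed

lemma self_in_p_index_normals: assumes Y: "subgroup Y G" shows "Y \<in> p_index_normals G p Y"
proof -
  have "card (RCOSETS (G\<lparr>carrier := Y\<rparr>) Y) * card Y = card Y"
    using index_mult_card[OF Y subgroup_incl[OF Y Y subset_refl]] .
  then have "card (RCOSETS (G\<lparr>carrier := Y\<rparr>) Y) = p ^ 0"
    using card_subgroup_pos[OF Y] by simp
  moreover have "Y \<lhd> G\<lparr>carrier := Y\<rparr>"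
    using Y by (simp add: normal_in_subgroup_iff subgroup.m_closed subgroup.m_inv_closed)
  ultimately show ?thesis unfolding p_index_normals_def by blast
qed

lemma p_index_normals_subgroup:
  assumes "subgroup Y G" "N \<in> p_index_normals G p Y"
  shows "subgroup N G" "N \<subseteq> Y"
  using assms normal_in_subgroup_iff unfolding p_index_normals_def by auto

lemma Op_subgroup: assumes Y: "subgroup Y G" shows "subgroup (Op G p Y) G" "Op G p Y \<subseteq> Y"
proof -
  show "subgroup (Op G p Y) G" unfolding Op_eq_Inter
    using p_index_normals_subgroup(1)[OF Y] self_in_p_index_normals[OF Y] by (intro subgroups_Inter) auto
  show "Op G p Y \<subseteq> Y" unfolding Op_eq_Inter using self_in_p_index_normals[OF Y] by (rule Inter_lower)
qed

lemma conjg_in_p_index_normals: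
  assumes g: "g \<in> carrier G" and Y: "subgroup Y G" and N: "N \<in> p_index_normals G p Y"
  shows "conjg G g N \<in> p_index_normals G p (conjg G g Y)"
proof -
  have NG: "subgroup N G" and NY: "N \<subseteq> Y" using p_index_normals_subgroup[OF Y N] by auto
  have Ys: "Y \<subseteq> carrier G" and Ns: "N \<subseteq> carrier G" using Y NY subgroup.subset by auto
  have Yg: "subgroup (conjg G g Y) G" and Ng: "subgroup (conjg G g N) G"
    using conjg_subgroup[OF g] Y NG by auto
  have normal: "\<forall>y\<in>Y. \<forall>n\<in>N. y \<otimes> n \<otimes> inv y \<in> N"
    using N Y unfolding p_index_normals_def by (simp add: normal_in_subgroup_iff)
  have "x \<otimes> h \<otimes> inv x \<in> conjg G g N" if xh: "x \<in> conjg G g Y" "h \<in> conjg G g N" for x h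
  proof -
    obtain y n where y: "y \<in> Y" "x = inv g \<otimes> y \<otimes> g" and n: "n \<in> N" "h = inv g \<otimes> n \<otimes> g"
      using xh by (auto simp: conjg_eq_image)
    have "y \<in> carrier G" "n \<in> carrier G" using y n Ys Ns by auto
    then have "x \<otimes> h \<otimes> inv x = inv g \<otimes> (y \<otimes> n \<otimes> inv y) \<otimes> g"
      using y n g by (simp add: inv_mult_group m_assoc)
    then show ?thesis unfolding conjg_eq_image using normal y(1) n(1) by blast
  qed
  then have "conjg G g N \<lhd> G\<lparr>carrier := conjg G g Y\<rparr>"
    using Ng conjg_mono[OF NY] by (simp add: normal_in_subgroup_iff[OF Yg])
  moreover have "card (RCOSETS (G\<lparr>carrier := conjg G g Y\<rparr>) (conjg G g N))
               = card (RCOSETS (G\<lparr>carrier := Y\<rparr>) N)"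
    using index_mult_card[OF Yg subgroup_incl[OF Ng Yg conjg_mono[OF NY]]]
      index_mult_card[OF Y subgroup_incl[OF NG Y NY]] card_subgroup_pos[OF NG]
      card_conjg[OF g Ns] card_conjg[OF g Ys] by (metis mult_right_cancel not_gr0)
  ultimately show ?thesis using N unfolding p_index_normals_def by simp
qed

lemma conjg_p_index_normals:
  assumes g: "g \<in> carrier G" and Y: "subgroup Y G"
  shows "conjg G g ` p_index_normals G p Y = p_index_normals G p (conjg G g Y)"
proof
  show "conjg G g ` p_index_normals G p Y \<subseteq> p_index_normals G p (conjg G g Y)"
    using conjg_in_p_index_normals[OF g Y] by blast
  show "p_index_normals G p (conjg G g Y) \<subseteq> conjg G g ` p_index_normals G p Y"
  proof
    fix M assume M: "M \<in> p_index_normals G p (conjg G g Y)"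
    have Ys: "Y \<subseteq> carrier G" using Y subgroup.subset by auto
    have "M \<subseteq> carrier G"
      using p_index_normals_subgroup[OF conjg_subgroup[OF g Y] M] subgroup.subset by blast
    then have "M = conjg G g (conjg G (inv g) M)" by (simp add: conjg_conjg_inv g)
    moreover have "conjg G (inv g) M \<in> p_index_normals G p Y"
      using conjg_in_p_index_normals[OF inv_closed[OF g] conjg_subgroup[OF g Y] M]
      by (simp add: conjg_inv_conjg[OF g Ys])
    ultimately show "M \<in> conjg G g ` p_index_normals G p Y" by blast
  qed
qed

lemma Op_conjg:
  assumes g: "g \<in> carrier G" and Y: "subgroup Y G"
  shows "Op G p (conjg G g Y) = conjg G g (Op G p Y)"
proof -
  have inj: "inj_on (\<lambda>h. inv g \<otimes> h \<otimes> g) (carrier G)"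
    using g by (intro inj_onI) simp
  have "Op G p (conjg G g Y) = (\<Inter>N\<in>p_index_normals G p Y. conjg G g N)"
    unfolding Op_eq_Inter conjg_p_index_normals[OF g Y, symmetric] by simp
  also have "\<dots> = conjg G g (Op G p Y)"
    unfolding Op_eq_Inter conjg_eq_image
    using image_INT[OF inj, of "p_index_normals G p Y" id] self_in_p_index_normals[OF Y]
      p_index_normals_subgroup[OF Y] subgroup.subset by fastforce
  finally show ?thesis .
qed

lemma card_Op_centr_conjg:
  assumes g: "g \<in> carrier G" and H: "H \<subseteq> carrier G"
  shows "card (Op G p (centr G (conjg G g H))) = card (Op G p (centr G H))"
  using Op_conjg[OF g centr_subgroup[OF H]] card_conjg[OF g] Op_subgroup(1)[OF centr_subgroup[OF H]]
    subgroup.subset conjg_centr[OF g H] by metis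

lemma card_centr_conjg:
  assumes g: "g \<in> carrier G" and H: "H \<subseteq> carrier G"
  shows "card (centr G (conjg G g H)) = card (centr G H)"
  using conjg_centr[OF g H] card_conjg[OF g centr_closed] by metis

lemma conjg_strict_interval:
  assumes g: "g \<in> carrier G" and H: "H \<subseteq> carrier G" and K: "K \<subseteq> carrier G"
  shows "{L. subgroup L G \<and> conjg G g H \<subseteq> L \<and> L \<subset> conjg G g K}
       = conjg G g ` {L. subgroup L G \<and> H \<subseteq> L \<and> L \<subset> K}"
proof (intro equalityI subsetI)
  fix M assume M: "M \<in> {L. subgroup L G \<and> conjg G g H \<subseteq> L \<and> L \<subset> conjg G g K}"
  then have Ms: "M \<subseteq> carrier G" using subgroup.subset by auto
  let ?L = "conjg G (inv g) M"
  have Ls: "?L \<subseteq> carrier G" using conjg_closed g Ms by simp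
  have M_eq: "M = conjg G g ?L" using conjg_conjg_inv[OF g Ms] by simp
  have "?L \<in> {L. subgroup L G \<and> H \<subseteq> L \<and> L \<subset> K}"
    using M conjg_subgroup[of "inv g" M] g M_eq conjg_subset_conjg_iff[OF g H Ls]
      conjg_subset_conjg_iff[OF g Ls K] conjg_eq_conjg_iff[OF g Ls K] by auto
  then show "M \<in> conjg G g ` {L. subgroup L G \<and> H \<subseteq> L \<and> L \<subset> K}" using M_eq by blast
next
  fix M assume "M \<in> conjg G g ` {L. subgroup L G \<and> H \<subseteq> L \<and> L \<subset> K}"
  then obtain L where L: "subgroup L G" "H \<subseteq> L" "L \<subset> K" and M: "M = conjg G g L" by blast
  have Ls: "L \<subseteq> carrier G" using L subgroup.subset by auto
  show "M \<in> {L. subgroup L G \<and> conjg G g H \<subseteq> L \<and> L \<subset> conjg G g K}"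
    using L M conjg_subgroup[OF g L(1)] conjg_subset_conjg_iff[OF g H Ls]
      conjg_subset_conjg_iff[OF g Ls K] conjg_eq_conjg_iff[OF g Ls K] by auto
qed

lemma mu_conjg:
  assumes g: "g \<in> carrier G"
  shows "subgroup H G \<Longrightarrow> subgroup K G \<Longrightarrow> mu G (conjg G g H) (conjg G g K) = mu G H K"
proof (induction "card K" arbitrary: H K rule: less_induct)
  case less
  have Hs: "H \<subseteq> carrier G" and Ks: "K \<subseteq> carrier G" using less.prems subgroup.subset by auto
  have Hg: "subgroup (conjg G g H) G" and Kg: "subgroup (conjg G g K) G"
    using conjg_subgroup[OF g] less.prems by auto
  consider "\<not> H \<subseteq> K" | "H = K" | "H \<subset> K" by blast
  then show ?case
  proof cases
    case 1
    then show ?thesis using conjg_subset_conjg_iff[OF g Hs Ks] by (simp add: mu_eq_0)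
  next
    case 2
    then show ?thesis using mu_refl Hg less.prems by simp
  next
    case 3
    let ?S = "{L. subgroup L G \<and> H \<subseteq> L \<and> L \<subset> K}"
    have inj: "inj_on (conjg G g) ?S"
      by (rule inj_onI) (metis (no_types, lifting) conjg_eq_conjg_iff[OF g] mem_Collect_eq subgroup.subset)
    have IH: "mu G (conjg G g H) (conjg G g L) = mu G H L" if L: "L \<in> ?S" for L
    proof -
      have "card L < card K" using L finite_subgroup[OF less.prems(2)] psubset_card_mono by auto
      then show ?thesis using less.hyps[of L H] L less.prems(1) by simp
    qed
    have HK': "conjg G g H \<subseteq> conjg G g K" "conjg G g H \<noteq> conjg G g K"
      using 3 conjg_subset_conjg_iff[OF g Hs Ks] conjg_eq_conjg_iff[OF g Hs Ks] by auto
    have "mu G (conjg G g H) (conjg G g K)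
        = - (\<Sum>L\<in>{L. subgroup L G \<and> conjg G g H \<subseteq> L \<and> L \<subset> conjg G g K}. mu G (conjg G g H) L)"
      using mu_psubset[OF Hg Kg] HK' by simp
    also have "\<dots> = - (\<Sum>L\<in>?S. mu G (conjg G g H) (conjg G g L))"
      unfolding conjg_strict_interval[OF g Hs Ks] by (simp add: sum.reindex[OF inj])
    also have "\<dots> = - (\<Sum>L\<in>?S. mu G H L)"
      using IH by (intro arg_cong[of _ _ uminus] sum.cong) auto
    also have "\<dots> = mu G H K" using mu_psubset[OF less.prems 3] by simp
    finally show ?thesis .
  qed
qed

lemma mu1_conjg: "g \<in> carrier G \<Longrightarrow> subgroup K G \<Longrightarrow> mu1 G (conjg G g K) = mu1 G K"
  unfolding mu1_def using mu_conjg[of g "{\<one>}" K] conjg_trivial triv_subgroup by simp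

lemma psubsD: "K \<in> psubs G p \<Longrightarrow> subgroup K G \<and> K \<noteq> {\<one>} \<and> (\<exists>n. card K = p ^ n)"
  unfolding psubs_def by simp

lemma psubs_subgroup: "K \<in> psubs G p \<Longrightarrow> subgroup K G"
  unfolding psubs_def by simp

lemma psubs_subset: "K \<in> psubs G p \<Longrightarrow> K \<subseteq> carrier G"
  using psubs_subgroup subgroup.subset by blast

lemma finite_psubs: "finite (psubs G p)"
proof (rule finite_subset)
  show "psubs G p \<subseteq> Pow (carrier G)" using psubs_subset by blast
qed (simp add: finite_carrier)

lemma conjg_psubs: assumes g: "g \<in> carrier G" and K: "K \<in> psubs G p"
  shows "conjg G g K \<in> psubs G p"
proof -
  have K': "subgroup K G" "K \<noteq> {\<one>}" "\<exists>n. card K = p ^ n" and Ks: "K \<subseteq> carrier G"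
    using psubsD[OF K] psubs_subset[OF K] by auto
  have "conjg G g K \<noteq> {\<one>}"
    using K'(2) conjg_trivial[OF g] conjg_eq_conjg_iff[OF g Ks, of "{\<one>}"] by auto
  then show ?thesis unfolding psubs_def using conjg_subgroup[OF g K'(1)] card_conjg[OF g Ks] K' by simp
qed

lemma card_transp_eq_sum:
  "of_nat (card (transp G H K)) = (\<Sum>g\<in>carrier G. if conjg G g H \<subseteq> K then 1 else (0 :: 'c :: comm_semiring_1))"
  unfolding transp_def using finite_carrier by (simp add: sum.inter_filter[symmetric])

lemma sum_card_transp_right:
  assumes "finite Obj" and c: "\<And>g. g \<in> carrier G \<Longrightarrow> (\<Sum>K\<in>{K\<in>Obj. conjg G g H \<subseteq> K}. f K) = c"
  shows "(\<Sum>K\<in>Obj. of_nat (card (transp G H K)) * f K) = of_nat (order G) * (c :: 'c :: comm_semiring_1)"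
proof -
  have "(\<Sum>K\<in>Obj. of_nat (card (transp G H K)) * f K)
      = (\<Sum>K\<in>Obj. \<Sum>g\<in>carrier G. if conjg G g H \<subseteq> K then f K else 0)"
    by (simp add: card_transp_eq_sum sum_distrib_right if_distrib[of "\<lambda>t. t * _"] cong: if_cong)
  also have "\<dots> = (\<Sum>g\<in>carrier G. \<Sum>K\<in>{K\<in>Obj. conjg G g H \<subseteq> K}. f K)"
    by (subst sum.swap) (simp add: sum.inter_filter[OF \<open>finite Obj\<close>])
  also have "\<dots> = of_nat (order G) * c" by (simp add: c order_def)
  finally show ?thesis .
qed

lemma sum_card_transp_left:
  assumes "finite Obj" "Obj \<subseteq> Pow (carrier G)" "K \<subseteq> carrier G"
    and c: "\<And>g. g \<in> carrier G \<Longrightarrow> (\<Sum>H\<in>{H\<in>Obj. H \<subseteq> conjg G g K}. f H) = c"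
  shows "(\<Sum>H\<in>Obj. f H * of_nat (card (transp G H K))) = of_nat (order G) * (c :: 'c :: comm_semiring_1)"
proof -
  have "(\<Sum>H\<in>Obj. f H * of_nat (card (transp G H K)))
      = (\<Sum>H\<in>Obj. \<Sum>g\<in>carrier G. if H \<subseteq> conjg G (inv g) K then f H else 0)"
    using assms(2,3)
    by (intro sum.cong refl) (auto simp: card_transp_eq_sum sum_distrib_left conjg_subset_iff intro!: sum.cong)
  also have "\<dots> = (\<Sum>g\<in>carrier G. \<Sum>H\<in>{H\<in>Obj. H \<subseteq> conjg G (inv g) K}. f H)"
    by (subst sum.swap) (simp add: sum.inter_filter[OF \<open>finite Obj\<close>])
  also have "\<dots> = of_nat (order G) * c" by (simp add: c order_def)
  finally show ?thesis .
qed

lemma card_rcosets_of_closed: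
  assumes U: "subgroup U G" and A: "A \<subseteq> carrier G" and closed: "\<And>u x. u \<in> U \<Longrightarrow> x \<in> A \<Longrightarrow> u \<otimes> x \<in> A"
  shows "card {U #> g | g. g \<in> A} * card U = card A"
proof -
  let ?C = "{U #> g | g. g \<in> A}"
  have Us: "U \<subseteq> carrier G" using U subgroup.subset by blast
  have C: "?C \<subseteq> rcosets U" using A rcosetsI[OF Us] by blast
  have union: "\<Union> ?C = A"
  proof
    show "\<Union> ?C \<subseteq> A" unfolding r_coset_def using closed by auto
    show "A \<subseteq> \<Union> ?C" using rcos_self[OF _ U] A by blast
  qed
  have "card U * card ?C = card (\<Union> ?C)"
  proof (rule card_partition)
    show "finite ?C" "finite (\<Union> ?C)"
      using union finite_subset[OF A finite_carrier] by simp_all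
    show "card c = card U" if "c \<in> ?C" for c using C that card_rcosets_equal[OF _ Us] by auto
    show "c1 \<inter> c2 = {}" if "c1 \<in> ?C" "c2 \<in> ?C" "c1 \<noteq> c2" for c1 c2
      using C that rcos_disjoint[OF U] unfolding pairwise_def disjnt_def by blast
  qed
  then show ?thesis using union by (simp add: mult.commute)
qed

lemma card_lcosets_of_closed:
  assumes K: "subgroup K G" and A: "A \<subseteq> carrier G" and closed: "\<And>k x. k \<in> K \<Longrightarrow> x \<in> A \<Longrightarrow> x \<otimes> k \<in> A"
  shows "card {g <# K | g. g \<in> A} * card K = card A"
proof -
  let ?C = "{g <# K | g. g \<in> A}"
  have Ks: "K \<subseteq> carrier G" using K subgroup.subset by blast
  have C: "?C \<subseteq> lcosets K" using A unfolding LCOSETS_def by blast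
  have union: "\<Union> ?C = A"
  proof
    show "\<Union> ?C \<subseteq> A" unfolding l_coset_def using closed by auto
    show "A \<subseteq> \<Union> ?C" using lcos_self[OF _ K] A by blast
  qed
  have "card K * card ?C = card (\<Union> ?C)"
  proof (rule card_partition)
    show "finite ?C" "finite (\<Union> ?C)"
      using union finite_subset[OF A finite_carrier] by simp_all
    show "card c = card K" if "c \<in> ?C" for c using C that l_card_cosets_equal[OF _ Ks finite_carrier] by auto
    show "c1 \<inter> c2 = {}" if "c1 \<in> ?C" "c2 \<in> ?C" "c1 \<noteq> c2" for c1 c2
      using C that lcos_disjoint[OF K] by blast
  qed
  then show ?thesis using union by (simp add: mult.commute)
qed

lemma centr_mult_transp:
  assumes H: "H \<subseteq> carrier G" and u: "u \<in> centr G H" and x: "x \<in> transp G H K"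
  shows "u \<otimes> x \<in> transp G H K"
proof -
  have uc: "u \<in> carrier G" and xc: "x \<in> carrier G" using u x unfolding centr_def transp_def by auto
  have "conjg G (u \<otimes> x) H = conjg G x (conjg G u H)" using conjg_conjg uc xc H by simp
  also have "\<dots> = conjg G x H" using conjg_centr_self[OF u H] by simp
  finally show ?thesis using x uc xc unfolding transp_def by simp
qed

lemma transp_mult_subgroup:
  assumes H: "H \<subseteq> carrier G" and K: "subgroup K G" and k: "k \<in> K" and x: "x \<in> transp G H K"
  shows "x \<otimes> k \<in> transp G H K"
proof -
  have kc: "k \<in> carrier G" and xc: "x \<in> carrier G" using k x K subgroup.subset unfolding transp_def by auto
  have "conjg G (x \<otimes> k) H = conjg G k (conjg G x H)" using conjg_conjg kc xc H by simp
  also have "\<dots> \<subseteq> conjg G k K" using x conjg_mono unfolding transp_def by blast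
  also have "\<dots> \<subseteq> K" unfolding conjg_eq_image using k K
    by (auto intro!: subgroup.m_closed subgroup.m_inv_closed)
  finally show ?thesis using x kc xc unfolding transp_def by simp
qed

lemma transp_closed: "transp G H K \<subseteq> carrier G"
  unfolding transp_def by auto

lemma card_homF: "H \<subseteq> carrier G \<Longrightarrow> card (homF G H K) * card (centr G H) = card (transp G H K)"
  unfolding homF_def
  by (rule card_rcosets_of_closed[OF centr_subgroup transp_closed]) (auto intro: centr_mult_transp)

lemma card_homL: "H \<subseteq> carrier G \<Longrightarrow> card (homL G p H K) * card (Op G p (centr G H)) = card (transp G H K)"
  unfolding homL_def
  by (rule card_rcosets_of_closed[OF Op_subgroup(1)[OF centr_subgroup] transp_closed])
     (use centr_mult_transp Op_subgroup(2)[OF centr_subgroup] in blast)+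

lemma card_homO: "H \<subseteq> carrier G \<Longrightarrow> subgroup K G \<Longrightarrow> card (homO G H K) * card K = card (transp G H K)"
  unfolding homO_def by (rule card_lcosets_of_closed[OF _ transp_closed]) (auto intro: transp_mult_subgroup)

lemma conj_class_subset_psubs: "K \<in> psubs G p \<Longrightarrow> conj_class K \<subseteq> psubs G p"
  unfolding conj_class_def using conjg_psubs by blast

lemma conjclasses_eq_image: "conjclasses G p = conj_class ` psubs G p"
  unfolding conjclasses_def conj_class_def by blast

lemma conj_class_fibre:
  assumes K: "K \<in> psubs G p"
  shows "{L\<in>psubs G p. conj_class L = conj_class K} = conj_class K"
proof (intro equalityI subsetI)
  fix L assume "L \<in> {L\<in>psubs G p. conj_class L = conj_class K}"
  then show "L \<in> conj_class K" using self_in_conj_class[OF psubs_subset] by auto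
next
  fix L assume "L \<in> conj_class K"
  then show "L \<in> {L\<in>psubs G p. conj_class L = conj_class K}"
    using conj_class_subset_psubs[OF K] conj_class_eq[OF psubs_subset[OF K]] by auto
qed

lemma sum_conj_class:
  assumes K: "K \<in> psubs G p" and h: "\<And>g. g \<in> carrier G \<Longrightarrow> h (conjg G g K) = h K"
  shows "(\<Sum>L\<in>conj_class K. h L) = real (order G) / real (card (transp G K K)) * h K"
proof -
  have Ks: "K \<subseteq> carrier G" "finite K" using psubs_subset[OF K] finite_subgroup[OF psubs_subgroup[OF K]] .
  have "h L = h K" if "L \<in> conj_class K" for L
    using that h unfolding conj_class_def by auto
  then have "(\<Sum>L\<in>conj_class K. h L) = real (card (conj_class K)) * h K" by simp
  also have "real (card (conj_class K)) = real (order G) / real (card (transp G K K))"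
    using card_conj_class[OF Ks] order_pos by (simp add: eq_divide_eq flip: of_nat_mult) auto
  finally show ?thesis .
qed

lemma sum_psubs_by_conjclasses:
  assumes h: "\<And>g K. g \<in> carrier G \<Longrightarrow> K \<in> psubs G p \<Longrightarrow> h (conjg G g K) = h K"
  shows "(\<Sum>K\<in>psubs G p. h K) = (\<Sum>c\<in>conjclasses G p. let K = (SOME K. K \<in> c) in
           real (order G) / real (card (transp G K K)) * h K)"
proof -
  have "(\<Sum>K\<in>psubs G p. h K) = (\<Sum>c\<in>conj_class ` psubs G p. \<Sum>K\<in>{K\<in>psubs G p. conj_class K = c}. h K)"
    by (rule sum.image_gen[OF finite_psubs])
  also have "\<dots> = (\<Sum>c\<in>conj_class ` psubs G p. let K = (SOME K. K \<in> c) in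
           real (order G) / real (card (transp G K K)) * h K)"
  proof (rule sum.cong[OF refl])
    fix c assume "c \<in> conj_class ` psubs G p"
    then obtain K0 where K0: "K0 \<in> psubs G p" and c: "c = conj_class K0" by blast
    define R where "R = (SOME K. K \<in> c)"
    have "R \<in> c" unfolding R_def c using self_in_conj_class[OF psubs_subset[OF K0]] by (rule someI)
    then have R: "R \<in> psubs G p" and c_R: "c = conj_class R"
      using conj_class_subset_psubs[OF K0] conj_class_eq[OF psubs_subset[OF K0]] c by auto
    show "(\<Sum>K\<in>{K\<in>psubs G p. conj_class K = c}. h K) = (let K = (SOME K. K \<in> c) in
           real (order G) / real (card (transp G K K)) * h K)"
      unfolding Let_def R_def[symmetric] unfolding c_R conj_class_fibre[OF R]
      by (rule sum_conj_class[OF R h[OF _ R]])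
  qed
  finally show ?thesis unfolding conjclasses_eq_image .
qed

end

locale finite_group_p = finite_group +
  fixes p :: nat
  assumes prime_p: "Factorial_Ring.prime p"
begin

lemma psubs_subgroup_closed:
  assumes L: "subgroup L G" "L \<noteq> {\<one>}" and LK: "L \<subseteq> K" and K: "K \<in> psubs G p"
  shows "L \<in> psubs G p"
proof -
  obtain n where K': "subgroup K G" and n: "card K = p ^ n" using psubsD[OF K] by auto
  have "card L dvd card K"
    using index_mult_card[OF K' subgroup_incl[OF L(1) K' LK]] by (metis dvd_triv_right)
  then have "\<exists>i\<le>n. card L = p ^ i" using n divides_primepow_nat[OF prime_p] by simp
  then show ?thesis unfolding psubs_def using L by auto
qed

lemma psubs_interval:
  assumes "H \<in> psubs G p" "K \<in> psubs G p"
  shows "{L \<in> psubs G p. H \<subseteq> L \<and> L \<subseteq> K} = interval H K"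
proof (intro equalityI subsetI)
  fix L assume "L \<in> interval H K"
  then have L: "subgroup L G" "H \<subseteq> L" "L \<subseteq> K" unfolding interval_def by auto
  have "L \<noteq> {\<one>}" using L(2) psubsD[OF assms(1)] subgroup.one_closed by blast
  then show "L \<in> {L \<in> psubs G p. H \<subseteq> L \<and> L \<subseteq> K}"
    using psubs_subgroup_closed[OF L(1) _ L(3) assms(2)] L by simp
qed (auto simp: interval_def dest: psubsD)

lemma sum_mu_above:
  assumes H: "H \<in> psubs G p" and K: "K \<in> psubs G p"
  shows "(\<Sum>L\<in>{L\<in>psubs G p. H \<subseteq> L}. mu G L K) = (if H = K then 1 else 0)"
proof -
  have "(\<Sum>L\<in>{L\<in>psubs G p. H \<subseteq> L}. mu G L K) = (\<Sum>L\<in>{L\<in>psubs G p. H \<subseteq> L \<and> L \<subseteq> K}. mu G L K)"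
    by (rule sum.mono_neutral_right) (auto simp: finite_psubs mu_eq_0)
  also have "\<dots> = (if H = K then 1 else 0)"
  proof (cases "H \<subseteq> K")
    case True
    then show ?thesis
      unfolding psubs_interval[OF H K] by (rule sum_mu_interval_right[OF psubs_subgroup[OF H] psubs_subgroup[OF K]])
  next
    case False
    then have "{L\<in>psubs G p. H \<subseteq> L \<and> L \<subseteq> K} = {}" by blast
    then show ?thesis using False by (simp only: sum.empty) auto
  qed
  finally show ?thesis .
qed

lemma sum_mu_below:
  assumes H: "H \<in> psubs G p" and K: "K \<in> psubs G p"
  shows "(\<Sum>L\<in>{L\<in>psubs G p. L \<subseteq> K}. mu G H L) = (if H = K then 1 else 0)"
proof -
  have "(\<Sum>L\<in>{L\<in>psubs G p. L \<subseteq> K}. mu G H L) = (\<Sum>L\<in>{L\<in>psubs G p. H \<subseteq> L \<and> L \<subseteq> K}. mu G H L)"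
    by (rule sum.mono_neutral_right) (auto simp: finite_psubs intro!: mu_eq_0)
  also have "\<dots> = (if H = K then 1 else 0)"
  proof (cases "H \<subseteq> K")
    case True
    then show ?thesis
      unfolding psubs_interval[OF H K] by (rule sum_mu_interval_left[OF psubs_subgroup[OF H] psubs_subgroup[OF K]])
  next
    case False
    then have "{L\<in>psubs G p. H \<subseteq> L \<and> L \<subseteq> K} = {}" by blast
    then show ?thesis using False by (simp only: sum.empty) auto
  qed
  finally show ?thesis .
qed

text \<open>The trivial subgroup lies below every \<open>K\<close> but is not an object, whence the value \<open>-1\<close>.\<close>
lemma sum_mu1_below:
  assumes K: "K \<in> psubs G p"
  shows "(\<Sum>L\<in>{L\<in>psubs G p. L \<subseteq> K}. mu1 G L) = -1"
proof -
  have K': "subgroup K G" "K \<noteq> {\<one>}" using psubsD[OF K] by auto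
  have one_K: "{\<one>} \<subseteq> K" using subgroup.one_closed[OF K'(1)] by blast
  have "interval {\<one>} K = insert {\<one>} {L\<in>psubs G p. L \<subseteq> K}"
  proof (intro equalityI subsetI)
    fix L assume "L \<in> interval {\<one>} K"
    then show "L \<in> insert {\<one>} {L\<in>psubs G p. L \<subseteq> K}"
      unfolding interval_def using psubs_subgroup_closed[OF _ _ _ K] by blast
  qed (use one_K triv_subgroup in \<open>auto simp: interval_def dest: psubs_subgroup intro: subgroup.one_closed\<close>)
  moreover have "{\<one>} \<notin> psubs G p" unfolding psubs_def by simp
  ultimately have "mu G {\<one>} {\<one>} + (\<Sum>L\<in>{L\<in>psubs G p. L \<subseteq> K}. mu G {\<one>} L) = 0"
    using sum_mu_interval_left[OF triv_subgroup K'(1) one_K] K'(2) finite_psubs by simp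
  then show ?thesis using mu_refl[OF triv_subgroup] unfolding mu1_def by simp
qed

lemma sum_card_mu_below:
  assumes K: "K \<in> psubs G p"
  shows "(\<Sum>L\<in>{L\<in>psubs G p. L \<subseteq> K}. \<Sum>H\<in>psubs G p. of_nat (card H) * of_int (mu G H L))
    = (of_nat (card K) :: 'c :: comm_ring_1)"
proof -
  have "(\<Sum>L\<in>{L\<in>psubs G p. L \<subseteq> K}. \<Sum>H\<in>psubs G p. of_nat (card H) * of_int (mu G H L))
      = (\<Sum>H\<in>psubs G p. of_nat (card H) * of_int (\<Sum>L\<in>{L\<in>psubs G p. L \<subseteq> K}. mu G H L) :: 'c)"
    by (subst sum.swap) (simp add: sum_distrib_left)
  also have "\<dots> = (\<Sum>H\<in>psubs G p. if H = K then of_nat (card H) else 0)"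
    by (intro sum.cong refl) (simp add: sum_mu_below K)
  also have "\<dots> = of_nat (card K)" using K finite_psubs by (simp add: sum.delta')
  finally show ?thesis .
qed

lemma moebius_inversion_above:
  assumes H: "H \<in> psubs G p"
  shows "(\<Sum>L\<in>{L\<in>psubs G p. H \<subseteq> L}. \<Sum>K\<in>psubs G p. of_int (mu G L K) * w K)
    = (w H :: 'c :: comm_ring_1)"
proof -
  have "(\<Sum>L\<in>{L\<in>psubs G p. H \<subseteq> L}. \<Sum>K\<in>psubs G p. of_int (mu G L K) * w K)
      = (\<Sum>K\<in>psubs G p. of_int (\<Sum>L\<in>{L\<in>psubs G p. H \<subseteq> L}. mu G L K) * w K)"
    by (subst sum.swap) (simp add: sum_distrib_right)
  also have "\<dots> = (\<Sum>K\<in>psubs G p. if H = K then w K else 0)"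
    by (intro sum.cong refl) (simp add: sum_mu_above H)
  also have "\<dots> = w H" using H finite_psubs by (simp add: sum.delta)
  finally show ?thesis .
qed

lemma some_in_conjclass:
  assumes "c \<in> conjclasses G p" shows "(SOME K. K \<in> c) \<in> psubs G p"
proof -
  obtain K where K: "K \<in> psubs G p" and c: "c = conj_class K"
    using assms unfolding conjclasses_eq_image by blast
  have "(SOME K. K \<in> c) \<in> c" unfolding c using self_in_conj_class[OF psubs_subset[OF K]] by (rule someI)
  then show ?thesis using conj_class_subset_psubs[OF K] c by blast
qed

end

lemma euler_char_eq_sum_coweighting:
  assumes "finite Ob" and w: "is_weighting Ob z k" and cw: "is_coweighting Ob z k'"
  shows "euler_char Ob z = (\<Sum>a\<in>Ob. k' a)"
proof -
  define k0 where "k0 = (SOME k. is_weighting Ob z k)"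
  have w0: "is_weighting Ob z k0" unfolding k0_def by (rule someI[where P = "is_weighting Ob z", OF w])
  have "(\<Sum>b\<in>Ob. k0 b) = (\<Sum>b\<in>Ob. (\<Sum>a\<in>Ob. k' a * real (z a b)) * k0 b)"
    using cw unfolding is_coweighting_def by simp
  also have "\<dots> = (\<Sum>a\<in>Ob. k' a * (\<Sum>b\<in>Ob. real (z a b) * k0 b))"
    by (simp add: sum_distrib_right sum_distrib_left mult.assoc) (rule sum.swap)
  also have "\<dots> = (\<Sum>a\<in>Ob. k' a)" using w0 unfolding is_weighting_def by simp
  finally show ?thesis unfolding euler_char_def k0_def .
qed

lemma is_weighting_scale_columns:
  assumes "\<And>a b. a \<in> Ob \<Longrightarrow> b \<in> Ob \<Longrightarrow> real (z' a b) * d b = real (z a b)"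
    and "is_weighting Ob z k"
  shows "is_weighting Ob z' (\<lambda>b. d b * k b)"
  using assms unfolding is_weighting_def by (simp add: mult.assoc[symmetric])

text \<open>\<open>\<T>\<close>, \<open>\<L>\<close> and \<open>\<F>\<close> are obtained from the transporter category by dividing each hom-set
  \<open>N\<^sub>G(H,K)\<close> by a free action of a group of order \<open>d H\<close> (trivial, \<open>O\<^sup>p C\<^sub>G(H)\<close>, \<open>C\<^sub>G(H)\<close>).\<close>
locale transporter_quotient = finite_group_p +
  fixes z :: "'a set \<Rightarrow> 'a set \<Rightarrow> nat" and d :: "'a set \<Rightarrow> real"
  assumes d_pos: "K \<in> psubs G p \<Longrightarrow> d K > 0"
    and d_conjg: "g \<in> carrier G \<Longrightarrow> K \<in> psubs G p \<Longrightarrow> d (conjg G g K) = d K"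
    and card_hom: "H \<in> psubs G p \<Longrightarrow> K \<in> psubs G p \<Longrightarrow> real (z H K) * d H = real (card (transp G H K))"
begin

lemma weighting:
  "is_weighting (psubs G p) z (\<lambda>H. (\<Sum>K\<in>psubs G p. of_int (mu G H K) * d K) / real (order G))"
  unfolding is_weighting_def
proof
  fix H assume H: "H \<in> psubs G p"
  let ?w = "\<lambda>L. \<Sum>K\<in>psubs G p. of_int (mu G L K) * d K"
  have "(\<Sum>L\<in>psubs G p. real (card (transp G H L)) * ?w L) = real (order G) * d H"
  proof (rule sum_card_transp_right[OF finite_psubs])
    fix g assume g: "g \<in> carrier G"
    show "(\<Sum>L\<in>{L\<in>psubs G p. conjg G g H \<subseteq> L}. ?w L) = d H"
      using moebius_inversion_above[OF conjg_psubs[OF g H], of d] d_conjg[OF g H] by simp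
  qed
  moreover have "real (z H L) * (?w L / real (order G)) = real (card (transp G H L)) * ?w L / (d H * real (order G))"
    if "L \<in> psubs G p" for L
    using card_hom[OF H that, symmetric] d_pos[OF H] by (simp add: field_simps)
  ultimately show "(\<Sum>L\<in>psubs G p. real (z H L) * (?w L / real (order G))) = 1"
    using d_pos[OF H] order_pos by (simp add: sum_divide_distrib[symmetric])
qed

lemma coweighting:
  "is_coweighting (psubs G p) z (\<lambda>K. - of_int (mu1 G K) * d K / real (order G))"
  unfolding is_coweighting_def
proof
  fix K assume K: "K \<in> psubs G p"
  have "(\<Sum>H\<in>psubs G p. - of_int (mu1 G H) * d H / real (order G) * real (z H K))
      = (\<Sum>H\<in>psubs G p. - of_int (mu1 G H) * real (card (transp G H K))) / real (order G)"
    unfolding sum_divide_distrib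
    by (intro sum.cong refl) (simp add: card_hom[OF _ K, symmetric] field_simps)
  also have "(\<Sum>H\<in>psubs G p. - of_int (mu1 G H) * real (card (transp G H K))) = real (order G) * 1"
  proof (rule sum_card_transp_left[OF finite_psubs _ psubs_subset[OF K]])
    show "psubs G p \<subseteq> Pow (carrier G)" using psubs_subset by blast
    fix g assume g: "g \<in> carrier G"
    show "(\<Sum>H\<in>{H\<in>psubs G p. H \<subseteq> conjg G g K}. - of_int (mu1 G H)) = (1 :: real)"
      using sum_mu1_below[OF conjg_psubs[OF g K]] by (simp add: sum_negf flip: of_int_sum)
  qed
  finally show "(\<Sum>H\<in>psubs G p. - of_int (mu1 G H) * d H / real (order G) * real (z H K)) = 1"
    using order_pos by simp
qed

lemma euler_char:
  "euler_char (psubs G p) z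
    = (\<Sum>c\<in>conjclasses G p. let K = (SOME K. K \<in> c) in - of_int (mu1 G K) / real (z K K))"
proof -
  have "euler_char (psubs G p) z = (\<Sum>K\<in>psubs G p. - of_int (mu1 G K) * d K / real (order G))"
    by (rule euler_char_eq_sum_coweighting[OF finite_psubs weighting coweighting])
  also have "\<dots> = (\<Sum>c\<in>conjclasses G p. let K = (SOME K. K \<in> c) in
      real (order G) / real (card (transp G K K)) * (- of_int (mu1 G K) * d K / real (order G)))"
    by (rule sum_psubs_by_conjclasses) (simp add: mu1_conjg psubs_subgroup d_conjg)
  also have "\<dots> = (\<Sum>c\<in>conjclasses G p. let K = (SOME K. K \<in> c) in - of_int (mu1 G K) / real (z K K))"
  proof (rule sum.cong[OF refl])
    fix c assume "c \<in> conjclasses G p"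
    then have R: "(SOME K. K \<in> c) \<in> psubs G p" by (rule some_in_conjclass)
    show "(let K = (SOME K. K \<in> c) in
        real (order G) / real (card (transp G K K)) * (- of_int (mu1 G K) * d K / real (order G)))
      = (let K = (SOME K. K \<in> c) in - of_int (mu1 G K) / real (z K K))"
      using card_hom[OF R R, symmetric] d_pos[OF R] order_pos by (simp add: Let_def field_simps)
  qed
  finally show ?thesis .
qed

end

sublocale finite_group_p \<subseteq> transporter: transporter_quotient G p "\<lambda>H K. card (homT G H K)" "\<lambda>_. 1"
  by unfold_locales (simp_all add: homT_def)

sublocale finite_group_p \<subseteq> fusion:
  transporter_quotient G p "\<lambda>H K. card (homF G H K)" "\<lambda>K. real (card (centr G K))"
proof unfold_locales
  fix g K assume "g \<in> carrier G" "K \<in> psubs G p"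
  then show "real (card (centr G (conjg G g K))) = real (card (centr G K))"
    by (simp add: card_centr_conjg psubs_subset)
next
  fix H K assume "H \<in> psubs G p"
  then show "real (card (homF G H K)) * real (card (centr G H)) = real (card (transp G H K))"
    by (simp add: card_homF psubs_subset flip: of_nat_mult)
qed (simp add: card_subgroup_pos centr_subgroup psubs_subset)

sublocale finite_group_p \<subseteq> linking:
  transporter_quotient G p "\<lambda>H K. card (homL G p H K)" "\<lambda>K. real (card (Op G p (centr G K)))"
proof unfold_locales
  fix g K assume "g \<in> carrier G" "K \<in> psubs G p"
  then show "real (card (Op G p (centr G (conjg G g K)))) = real (card (Op G p (centr G K)))"
    by (simp add: card_Op_centr_conjg psubs_subset)
next
  fix H K assume "H \<in> psubs G p"
  then show "real (card (homL G p H K)) * real (card (Op G p (centr G H))) = real (card (transp G H K))"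
    by (simp add: card_homL psubs_subset flip: of_nat_mult)
qed (simp add: card_subgroup_pos Op_subgroup centr_subgroup psubs_subset)

lemma card_homS: "real (card (homS H K)) = (if H \<subseteq> K then 1 else 0)"
  unfolding homS_def by simp

context finite_group_p
begin

lemma weighting_S: "is_weighting (psubs G p) (\<lambda>H K. card (homS H K)) (\<lambda>H. \<Sum>K\<in>psubs G p. of_int (mu G H K))"
  unfolding is_weighting_def
proof
  fix H assume H: "H \<in> psubs G p"
  have "(\<Sum>L\<in>psubs G p. real (card (homS H L)) * (\<Sum>K\<in>psubs G p. of_int (mu G L K)))
      = (\<Sum>L\<in>{L\<in>psubs G p. H \<subseteq> L}. \<Sum>K\<in>psubs G p. of_int (mu G L K) * 1)"
    by (simp add: card_homS sum.inter_filter[OF finite_psubs] if_distrib[of "\<lambda>t. t * _"] cong: if_cong)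
  also have "\<dots> = 1" by (rule moebius_inversion_above[OF H])
  finally show "(\<Sum>L\<in>psubs G p. real (card (homS H L)) * (\<Sum>K\<in>psubs G p. of_int (mu G L K))) = 1" .
qed

lemma coweighting_S: "is_coweighting (psubs G p) (\<lambda>H K. card (homS H K)) (\<lambda>K. - of_int (mu1 G K))"
  unfolding is_coweighting_def
proof
  fix K assume K: "K \<in> psubs G p"
  have "(\<Sum>H\<in>psubs G p. - of_int (mu1 G H) * real (card (homS H K)))
      = (\<Sum>H\<in>{H\<in>psubs G p. H \<subseteq> K}. - of_int (mu1 G H))"
    by (simp add: card_homS sum.inter_filter[OF finite_psubs] if_distrib[of "\<lambda>t. _ * t"] cong: if_cong)
  also have "\<dots> = 1" by (simp add: sum_negf sum_mu1_below[OF K] flip: of_int_sum)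
  finally show "(\<Sum>H\<in>psubs G p. - of_int (mu1 G H) * real (card (homS H K))) = 1" .
qed

lemma euler_char_S:
  "euler_char (psubs G p) (\<lambda>H K. card (homS H K))
    = real (order G) * euler_char (psubs G p) (\<lambda>H K. card (homT G H K))"
  using euler_char_eq_sum_coweighting[OF finite_psubs weighting_S coweighting_S]
    euler_char_eq_sum_coweighting[OF finite_psubs transporter.weighting transporter.coweighting]
    order_pos
  by (simp add: sum_negf sum_divide_distrib[symmetric])

lemma weighting_O:
  "is_weighting (psubs G p) (\<lambda>H K. card (homO G H K))
     (\<lambda>H. real (card H) * (\<Sum>K\<in>psubs G p. of_int (mu G H K)) / real (order G))"
proof -
  have "real (card (homO G H K)) * real (card K) = real (card (homT G H K))"
    if "H \<in> psubs G p" "K \<in> psubs G p" for H K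
    using card_homO[OF psubs_subset psubs_subgroup] that by (simp add: homT_def flip: of_nat_mult)
  from is_weighting_scale_columns[OF this transporter.weighting] show ?thesis by simp
qed

lemma coweighting_O:
  "is_coweighting (psubs G p) (\<lambda>H K. card (homO G H K))
     (\<lambda>K. (\<Sum>H\<in>psubs G p. real (card H) * of_int (mu G H K)) / real (order G))"
  unfolding is_coweighting_def
proof
  fix K assume K: "K \<in> psubs G p"
  let ?k = "\<lambda>L. \<Sum>H\<in>psubs G p. real (card H) * of_int (mu G H L)"
  have K_pos: "real (card K) > 0" using card_subgroup_pos[OF psubs_subgroup[OF K]] by simp
  have hom: "real (card (homO G L K)) = real (card (transp G L K)) / real (card K)" if "L \<in> psubs G p" for L
    using card_homO[OF psubs_subset[OF that] psubs_subgroup[OF K]] K_pos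
    by (simp add: eq_divide_eq flip: of_nat_mult)
  have "(\<Sum>L\<in>psubs G p. ?k L / real (order G) * real (card (homO G L K)))
      = (\<Sum>L\<in>psubs G p. ?k L * real (card (transp G L K)) / (real (order G) * real (card K)))"
    by (intro sum.cong refl) (simp add: hom)
  also have "\<dots> = (\<Sum>L\<in>psubs G p. ?k L * real (card (transp G L K))) / (real (order G) * real (card K))"
    by (rule sum_divide_distrib[symmetric])
  also have "(\<Sum>L\<in>psubs G p. ?k L * real (card (transp G L K))) = real (order G) * real (card K)"
  proof (rule sum_card_transp_left[OF finite_psubs _ psubs_subset[OF K]])
    show "psubs G p \<subseteq> Pow (carrier G)" using psubs_subset by blast
    fix g assume g: "g \<in> carrier G"
    show "(\<Sum>L\<in>{L\<in>psubs G p. L \<subseteq> conjg G g K}. ?k L) = real (card K)"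
      using sum_card_mu_below[OF conjg_psubs[OF g K]] card_conjg[OF g psubs_subset[OF K]] by simp
  qed
  finally show "(\<Sum>L\<in>psubs G p. ?k L / real (order G) * real (card (homO G L K))) = 1"
    using order_pos K_pos by simp
qed

lemma euler_char_O:
  "euler_char (psubs G p) (\<lambda>H K. card (homO G H K))
    = (\<Sum>H\<in>psubs G p. \<Sum>K\<in>psubs G p. real (card H) * of_int (mu G H K)) / real (order G)"
  unfolding euler_char_eq_sum_coweighting[OF finite_psubs weighting_O coweighting_O]
    sum_divide_distrib[symmetric]
  by (subst sum.swap) (rule refl)

end

theorem theorem3p2:
  fixes G :: "('a,'b) monoid_scheme" and p :: nat
  assumes "group G" and "finite (carrier G)" and "Factorial_Ring.prime p"
  defines "Ob \<equiv> psubs G p"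
      and "n \<equiv> real (order G)"
      and "zS \<equiv> (\<lambda>H K. card (homS H K))"
      and "zT \<equiv> (\<lambda>H K. card (homT G H K))"
      and "zL \<equiv> (\<lambda>H K. card (homL G p H K))"
      and "zF \<equiv> (\<lambda>H K. card (homF G H K))"
      and "zO \<equiv> (\<lambda>H K. card (homO G H K))"
  shows
    \<comment> \<open>(i)\<close>
    "(is_weighting Ob zS (\<lambda>H. \<Sum>K\<in>Ob. of_int (mu G H K))
      \<and> is_coweighting Ob zS (\<lambda>K. - of_int (mu1 G K))
      \<and> euler_char Ob zS = n * euler_char Ob zT)
    \<comment> \<open>(ii)\<close>
    \<and> (is_weighting Ob zT (\<lambda>H. (\<Sum>K\<in>Ob. of_int (mu G H K)) / n)
      \<and> is_coweighting Ob zT (\<lambda>K. - of_int (mu1 G K) / n)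
      \<and> euler_char Ob zT =
          (\<Sum>c\<in>conjclasses G p. let K = (SOME K. K \<in> c) in - of_int (mu1 G K) / real (zT K K)))
    \<comment> \<open>(iii)\<close>
    \<and> (is_weighting Ob zL
          (\<lambda>H. (\<Sum>K\<in>Ob. of_int (mu G H K) * real (card (Op G p (centr G K)))) / n)
      \<and> is_coweighting Ob zL (\<lambda>K. - of_int (mu1 G K) * real (card (Op G p (centr G K))) / n)
      \<and> euler_char Ob zL =
          (\<Sum>c\<in>conjclasses G p. let K = (SOME K. K \<in> c) in - of_int (mu1 G K) / real (zL K K)))
    \<comment> \<open>(iv)\<close>
    \<and> (is_weighting Ob zF
          (\<lambda>H. (\<Sum>K\<in>Ob. of_int (mu G H K) * real (card (centr G K))) / n)
      \<and> is_coweighting Ob zF (\<lambda>K. - of_int (mu1 G K) * real (card (centr G K)) / n)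
      \<and> euler_char Ob zF =
          (\<Sum>c\<in>conjclasses G p. let K = (SOME K. K \<in> c) in - of_int (mu1 G K) / real (zF K K)))
    \<comment> \<open>(v)\<close>
    \<and> (is_weighting Ob zO (\<lambda>H. real (card H) * (\<Sum>K\<in>Ob. of_int (mu G H K)) / n)
      \<and> is_coweighting Ob zO (\<lambda>K. (\<Sum>H\<in>Ob. real (card H) * of_int (mu G H K)) / n)
      \<and> euler_char Ob zO = (\<Sum>H\<in>Ob. \<Sum>K\<in>Ob. real (card H) * of_int (mu G H K)) / n)"
proof -
  interpret finite_group_p G p
    using assms(1-3) unfolding finite_group_p_def finite_group_def finite_group_axioms_def
      finite_group_p_axioms_def by blast
  show ?thesis
    unfolding Ob_def n_def zS_def zT_def zL_def zF_def zO_def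
    using weighting_S coweighting_S euler_char_S
      transporter.weighting transporter.coweighting transporter.euler_char
      linking.weighting linking.coweighting linking.euler_char
      fusion.weighting fusion.coweighting fusion.euler_char
      weighting_O coweighting_O euler_char_O
    by simp
qed

end
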